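(* For every Polish group $G$, there is an $F_\sigma$ subgroup $H\subseteq G^\omega$ such that every $K_\sigma$ subgroup $K$ of $G^\omega$ is a continuous homomorphic pre-image of $H$, i.e., there is a continuous group homomorphism $\varphi:G^\omega\to G^\omega$ with $\varphi^{-1}(H)=K$.
   Context: $G^\omega$ carries the product topology. A $K_\sigma$ set is a countable union of compact sets. *)

theory Defs
  imports "HOL-Analysis.Analysis" "HOL-Library.Function_Algebras"
begin

definition subgroup_add :: "'a::group_add set \<Rightarrow> bool" where
  "subgroup_add H \<longleftrightarrow> 0 \<in> H \<and> (\<forall>x\<in>H. \<forall>y\<in>H. x + y \<in> H) \<and> (\<forall>x\<in>H. - x \<in> H)"

definition ksigma :: "'a::topological_space set \<Rightarrow> bool" where
  "ksigma S \<longleftrightarrow> (countable union_of compact) S"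

end

theory Submission
  imports Defs
begin

text \<open>
  Let \<open>X\<close> be a second countable, regular, \<open>T\<^sub>1\<close> topological group (such as \<open>G\<^sup>\<omega>\<close>).
  Call \<open>C\<^sub>0, C\<^sub>1, \<dots>\<close> a group chain if \<open>0 \<in> C\<^sub>0\<close>, \<open>C\<^sub>n + C\<^sub>n \<subseteq> C\<^sub>n\<^sub>+\<^sub>1\<close> and
  \<open>-C\<^sub>n \<subseteq> C\<^sub>n\<^sub>+\<^sub>1\<close>. Its union is a subgroup, and every \<open>K\<^sub>\<sigma>\<close> subgroup \<open>K\<close> is the union of a
  group chain \<open>A\<close> of compact sets. Using a countable base, regularity and continuity of the group
  operations on compact sets, one finds countably many group chains \<open>C\<^sup>j\<close> of closed sets (closures
  of finite unions of basic open sets) that separate compact group chains from points: whenever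
  \<open>x \<notin> A\<^sub>n\<close> there is \<open>j\<close> with \<open>A\<^sub>m \<subseteq> C\<^sup>j\<^sub>m\<close> for all \<open>m\<close> and \<open>x \<notin> C\<^sup>j\<^sub>n\<close>. Then
  \<open>H = \<Union>\<^sub>n \<Prod>\<^sub>j C\<^sup>j\<^sub>n \<subseteq> X\<^sup>\<omega>\<close> is an \<open>F\<^sub>\<sigma>\<close> subgroup, and \<open>K\<close> is its preimage under the continuous
  homomorphism that sends \<open>x\<close> to the sequence equal to \<open>x\<close> at the indices \<open>j\<close> with \<open>A \<subseteq> C\<^sup>j\<close>
  and to \<open>0\<close> elsewhere. Finally \<open>(G\<^sup>\<omega>)\<^sup>\<omega> \<cong> G\<^sup>\<omega>\<close> via a pairing bijection \<open>\<nat> \<times> \<nat> \<cong> \<nat>\<close>.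
\<close>

section \<open>Countable powers of topological groups\<close>

lemma separable_metrizable_imp_second_countable:
  assumes "metrizable_space X" "separable_space X"
  shows "second_countable X"
proof -
  obtain M d where md: "Metric_space M d" and X: "X = Metric_space.mtopology M d"
    using assms(1) unfolding metrizable_space_def by blast
  interpret Metric_space M d by (rule md)
  obtain C where C: "countable C" "mtopology closure_of C = M"
    using assms(2) unfolding separable_space_def X by auto
  define \<B> where "\<B> = (\<lambda>(c, n::nat). mball c (inverse (Suc n))) ` (C \<times> UNIV)"
  have "countable \<B>" unfolding \<B>_def using C(1) by auto
  moreover have "\<forall>V\<in>\<B>. openin mtopology V" unfolding \<B>_def by auto
  moreover have "\<exists>V\<in>\<B>. x \<in> V \<and> V \<subseteq> U" if oU: "openin mtopology U" and xU: "x \<in> U" for U x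
  proof -
    have U: "U \<subseteq> M \<and> (\<forall>x. x \<in> U \<longrightarrow> (\<exists>r>0. mball x r \<subseteq> U))"
      using oU openin_mtopology by simp
    obtain r where r: "r > 0" "mball x r \<subseteq> U" "x \<in> M"
      using U xU by blast
    obtain n::nat where n: "inverse (Suc n) < r / 2"
      using r(1) reals_Archimedean[of "r/2"] by auto
    have "x \<in> mtopology closure_of C" using C(2) r(3) by simp
    then have "\<forall>e>0. \<exists>y\<in>C. y \<in> mball x e"
      unfolding metric_closure_of by blast
    moreover have "(0::real) < inverse (Suc n)" by simp
    ultimately obtain c where c: "c \<in> C" "c \<in> mball x (inverse (Suc n))"
      by blast
    have "mball c (inverse (Suc n)) \<subseteq> mball x r"
    proof (rule mball_subset)
      show "d c x + inverse (real (Suc n)) \<le> r" using c n commute[of c x] by auto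
    qed (use r in auto)
    moreover have "x \<in> mball c (inverse (Suc n))" using c by (simp add: commute)
    moreover have "mball c (inverse (Suc n)) \<in> \<B>" unfolding \<B>_def using c by auto
    ultimately show ?thesis using r by blast
  qed
  ultimately show ?thesis unfolding second_countable_def X by blast
qed

lemma second_countable_euclidean_fun:
  assumes "second_countable (euclidean :: 'a::topological_space topology)"
  shows "second_countable (euclidean :: ('i::countable \<Rightarrow> 'a) topology)"
proof -
  obtain \<B> :: "'a set set" where \<B>: "countable \<B>" "\<forall>V\<in>\<B>. open V"
    "\<And>U x. open U \<Longrightarrow> x \<in> U \<Longrightarrow> \<exists>V\<in>\<B>. x \<in> V \<and> V \<subseteq> U"
    using assms unfolding second_countable_def by (metis open_openin)
  define \<B>' where "\<B>' = insert UNIV \<B>"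
  have open_\<B>': "open V" if "V \<in> \<B>'" for V
    using that \<B>(2) unfolding \<B>'_def by auto
  define \<P> where "\<P> = (\<lambda>X. Pi\<^sub>E UNIV X) ` {X. (\<forall>i::'i. X i \<in> \<B>') \<and> finite {i. X i \<noteq> UNIV}}"
  have "countable {X. (\<forall>i::'i. X i \<in> \<B>') \<and> finite {i. X i \<noteq> UNIV}}"
    using \<B>(1) unfolding \<B>'_def by (intro countable_product_event_const) auto
  then have "countable \<P>" unfolding \<P>_def by blast
  moreover have "\<forall>V\<in>\<P>. open V"
    unfolding \<P>_def using open_\<B>' by (auto intro!: open_PiE)
  moreover have "\<exists>V\<in>\<P>. x \<in> V \<and> V \<subseteq> U" if "open U" "x \<in> U" for U and x :: "'i \<Rightarrow> 'a"
  proof -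
    have "openin (product_topology (\<lambda>i. euclidean) UNIV) U"
      using that unfolding open_fun_def by auto
    from product_topology_open_contains_basis[OF this \<open>x \<in> U\<close>]
    obtain X where X: "x \<in> Pi\<^sub>E UNIV X" "\<And>i. open (X i)" "finite {i. X i \<noteq> UNIV}"
      "Pi\<^sub>E UNIV X \<subseteq> U"
      by auto
    define Y where "Y i = (if X i = UNIV then UNIV else (SOME V. V \<in> \<B> \<and> x i \<in> V \<and> V \<subseteq> X i))" for i
    have Y: "Y i \<in> \<B>' \<and> x i \<in> Y i \<and> Y i \<subseteq> X i" for i
    proof (cases "X i = UNIV")
      case False
      have "\<exists>V. V \<in> \<B> \<and> x i \<in> V \<and> V \<subseteq> X i" using \<B>(3)[OF X(2)] X(1) by blast
      from someI_ex[OF this] show ?thesis using False unfolding Y_def \<B>'_def by simp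
    qed (simp add: Y_def \<B>'_def)
    have "{i. Y i \<noteq> UNIV} \<subseteq> {i. X i \<noteq> UNIV}" unfolding Y_def by auto
    then have "finite {i. Y i \<noteq> UNIV}" using X(3) finite_subset by blast
    have "Pi\<^sub>E UNIV Y \<subseteq> Pi\<^sub>E UNIV X" using Y by (intro PiE_mono) blast
    then have "Pi\<^sub>E UNIV Y \<subseteq> U" using X(4) by (rule order.trans)
    moreover have "Pi\<^sub>E UNIV Y \<in> \<P>"
      unfolding \<P>_def using Y \<open>finite {i. Y i \<noteq> UNIV}\<close> by blast
    moreover have "x \<in> Pi\<^sub>E UNIV Y" using Y by auto
    ultimately show ?thesis by blast
  qed
  ultimately show ?thesis unfolding second_countable_def by (metis open_openin)
qed

lemma continuous_on_fun_add:
  assumes "continuous_on UNIV (\<lambda>p::'a::{topological_space,plus} \<times> 'a. fst p + snd p)"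
  shows "continuous_on UNIV (\<lambda>p::('i \<Rightarrow> 'a) \<times> ('i \<Rightarrow> 'a). fst p + snd p)"
proof (rule continuous_on_coordinatewise_then_product)
  fix i
  have "continuous_on UNIV (\<lambda>p::('i \<Rightarrow> 'a) \<times> ('i \<Rightarrow> 'a). (fst p i, snd p i))"
  proof (rule continuous_on_Pair)
    show "continuous_on UNIV (\<lambda>p::('i \<Rightarrow> 'a) \<times> ('i \<Rightarrow> 'a). fst p i)"
      by (rule continuous_on_compose2[OF continuous_on_product_coordinates continuous_on_fst[OF continuous_on_id]]) simp
    show "continuous_on UNIV (\<lambda>p::('i \<Rightarrow> 'a) \<times> ('i \<Rightarrow> 'a). snd p i)"
      by (rule continuous_on_compose2[OF continuous_on_product_coordinates continuous_on_snd[OF continuous_on_id]]) simp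
  qed
  from continuous_on_compose2[OF assms this]
  show "continuous_on UNIV (\<lambda>p::('i \<Rightarrow> 'a) \<times> ('i \<Rightarrow> 'a). (fst p + snd p) i)"
    by simp
qed

lemma continuous_on_fun_uminus:
  assumes "continuous_on UNIV (uminus :: 'a::{topological_space,uminus} \<Rightarrow> 'a)"
  shows "continuous_on UNIV (uminus :: ('i \<Rightarrow> 'a) \<Rightarrow> ('i \<Rightarrow> 'a))"
proof (rule continuous_on_coordinatewise_then_product)
  fix i
  from continuous_on_compose2[OF assms continuous_on_product_coordinates]
  show "continuous_on UNIV (\<lambda>p::'i \<Rightarrow> 'a. (- p) i)"
    by simp
qed

lemma regular_space_euclidean_fun:
  assumes "regular_space (euclidean :: 'a::topological_space topology)"
  shows "regular_space (euclidean :: ('i \<Rightarrow> 'a) topology)"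
proof -
  have "regular_space (product_topology (\<lambda>i::'i. euclidean :: 'a topology) UNIV)"
    unfolding regular_space_product_topology using assms by simp
  then show ?thesis by (simp add: euclidean_product_topology)
qed

lemma t1_space_euclidean_fun:
  assumes "t1_space (euclidean :: 'a::topological_space topology)"
  shows "t1_space (euclidean :: ('i \<Rightarrow> 'a) topology)"
proof -
  have "t1_space (product_topology (\<lambda>i::'i. euclidean :: 'a topology) UNIV)"
    unfolding t1_space_product_topology using assms by simp
  then show ?thesis by (simp add: euclidean_product_topology)
qed

lemma subgroup_add_vimage:
  fixes f :: "'a::group_add \<Rightarrow> 'b::group_add"
  assumes add: "\<And>x y. f (x + y) = f x + f y" and "subgroup_add H"
  shows "subgroup_add (f -` H)"
proof -
  have "f 0 + f 0 = f 0 + 0" using add[of 0 0] by simp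
  then have "f 0 = 0" by (simp only: add_left_cancel)
  then have "f (- x) = - f x" for x using add[of "- x" x] by (simp add: eq_neg_iff_add_eq_0)
  with \<open>f 0 = 0\<close> show ?thesis using assms(2) by (simp add: subgroup_add_def add)
qed

lemma closed_vimage_continuous_on:
  assumes "continuous_on UNIV f" "closed C"
  shows "closed (f -` C)"
proof -
  have "closedin euclidean {x \<in> topspace euclidean. f x \<in> C}"
    using assms by (intro closedin_continuous_map_preimage[where Y = euclidean]) simp_all
  then show ?thesis by (simp add: vimage_def)
qed

lemma fsigma_in_vimage:
  assumes "continuous_on UNIV f" "fsigma_in euclidean S"
  shows "fsigma_in euclidean (f -` S)"
proof -
  obtain \<C> where \<C>: "countable \<C>" "\<C> \<subseteq> Collect (closedin euclidean)" "\<Union>\<C> = S"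
    using assms(2) unfolding fsigma_in_def union_of_def by blast
  have "(vimage f) ` \<C> \<subseteq> Collect (closedin euclidean)"
  proof
    fix D assume "D \<in> (vimage f) ` \<C>"
    then obtain C where "C \<in> \<C>" "D = f -` C" by blast
    then show "D \<in> Collect (closedin euclidean)"
      using \<C>(2) closed_vimage_continuous_on[OF assms(1), of C] by auto
  qed
  then show ?thesis
    unfolding fsigma_in_def union_of_def
  proof (intro exI[of _ "(vimage f) ` \<C>"] conjI)
    show "countable ((vimage f) ` \<C>)" using \<C>(1) by blast
    show "\<Union>((vimage f) ` \<C>) = f -` S" using \<C>(3) by blast
  qed
qed

section \<open>Group chains\<close>

definition group_step :: "(nat \<Rightarrow> 'a::group_add set) \<Rightarrow> nat \<Rightarrow> bool" where
  "group_step C n \<longleftrightarrow> (\<forall>x\<in>C n. \<forall>y\<in>C n. x + y \<in> C (Suc n)) \<and> (\<forall>x\<in>C n. - x \<in> C (Suc n))"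

definition group_chain :: "(nat \<Rightarrow> 'a::group_add set) \<Rightarrow> bool" where
  "group_chain C \<longleftrightarrow> 0 \<in> C 0 \<and> (\<forall>n. group_step C n)"

lemma group_chain_zero:
  assumes "group_chain C"
  shows "0 \<in> C n"
proof (induction n)
  case 0
  then show ?case using assms by (simp add: group_chain_def)
next
  case (Suc n)
  then have "0 + 0 \<in> C (Suc n)" using assms unfolding group_chain_def group_step_def by blast
  then show ?case by simp
qed

lemma group_chain_mono:
  assumes "group_chain C" "n \<le> m"
  shows "C n \<subseteq> C m"
proof (rule lift_Suc_mono_le[of C, OF _ assms(2)])
  fix k
  show "C k \<subseteq> C (Suc k)"
  proof
    fix x assume "x \<in> C k"
    then have "x + 0 \<in> C (Suc k)"
      using assms(1) group_chain_zero[OF assms(1)] unfolding group_chain_def group_step_def by blast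
    then show "x \<in> C (Suc k)" by simp
  qed
qed

lemma subgroup_add_group_chain_Union:
  assumes "group_chain C"
  shows "subgroup_add (\<Union>n. C n)"
  unfolding subgroup_add_def
proof (intro conjI ballI)
  show "0 \<in> (\<Union>n. C n)" using group_chain_zero[OF assms] by blast
next
  fix x y assume "x \<in> (\<Union>n. C n)" "y \<in> (\<Union>n. C n)"
  then obtain n m where "x \<in> C n" "y \<in> C m" by blast
  then have "x \<in> C (max n m)" "y \<in> C (max n m)"
    using group_chain_mono[OF assms] by (meson max.cobounded1 max.cobounded2 subsetD)+
  then have "x + y \<in> C (Suc (max n m))"
    using assms by (simp add: group_chain_def group_step_def)
  then show "x + y \<in> (\<Union>n. C n)" by blast
next
  fix x assume "x \<in> (\<Union>n. C n)"
  then obtain n where "x \<in> C n" by blast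
  then have "- x \<in> C (Suc n)" using assms by (simp add: group_chain_def group_step_def)
  then show "- x \<in> (\<Union>n. C n)" by blast
qed

lemma group_chain_Pi:
  assumes "\<And>j. group_chain (C j)"
  shows "group_chain (\<lambda>n. {y. \<forall>j. y j \<in> C j n})"
  using assms by (simp add: group_chain_def group_step_def)

primrec generated_chain :: "(nat \<Rightarrow> 'a::group_add set) \<Rightarrow> nat \<Rightarrow> 'a set" where
  "generated_chain K 0 = insert 0 (K 0)"
| "generated_chain K (Suc n) = (\<lambda>p. fst p + snd p) ` (generated_chain K n \<times> generated_chain K n)
     \<union> uminus ` generated_chain K n \<union> K (Suc n)"

lemma group_chain_generated_chain: "group_chain (generated_chain K)"
  unfolding group_chain_def group_step_def
proof (intro conjI allI ballI)
  fix n x y assume "x \<in> generated_chain K n" "y \<in> generated_chain K n"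
  then have "(x, y) \<in> generated_chain K n \<times> generated_chain K n" by simp
  from imageI[OF this, of "\<lambda>p. fst p + snd p"]
  show "x + y \<in> generated_chain K (Suc n)" by simp
qed simp_all

lemma subset_generated_chain: "K n \<subseteq> generated_chain K n"
  by (cases n) auto

lemma generated_chain_subset:
  assumes "subgroup_add S" "\<And>n. K n \<subseteq> S"
  shows "generated_chain K n \<subseteq> S"
proof (induction n)
  case 0
  show ?case using assms unfolding subgroup_add_def by simp
next
  case (Suc n)
  then have "x + y \<in> S" if "x \<in> generated_chain K n" "y \<in> generated_chain K n" for x y
    using that assms(1) unfolding subgroup_add_def by blast
  moreover have "- x \<in> S" if "x \<in> generated_chain K n" for x
    using that Suc assms(1) unfolding subgroup_add_def by blast
  ultimately show ?case using assms(2)[of "Suc n"] by auto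
qed

lemma compact_generated_chain:
  fixes K :: "nat \<Rightarrow> 'a::{topological_space,group_add} set"
  assumes add: "continuous_on UNIV (\<lambda>p::'a \<times> 'a. fst p + snd p)"
    and neg: "continuous_on UNIV (uminus :: 'a \<Rightarrow> 'a)"
    and "\<And>n. compact (K n)"
  shows "compact (generated_chain K n)"
proof (induction n)
  case 0
  show ?case using assms(3) by simp
next
  case (Suc n)
  have "compact ((\<lambda>p. fst p + snd p) ` (generated_chain K n \<times> generated_chain K n))"
    using Suc compact_Times by (intro compact_continuous_image continuous_on_subset[OF add]) auto
  moreover have "compact (uminus ` generated_chain K n)"
    using Suc by (intro compact_continuous_image continuous_on_subset[OF neg]) auto
  ultimately show ?case using assms(3) by (simp add: compact_Un)
qed

lemma ksigma_subgroup_eq_Union_compact_chain: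
  fixes K :: "'a::{topological_space,group_add} set"
  assumes "continuous_on UNIV (\<lambda>p::'a \<times> 'a. fst p + snd p)"
    and "continuous_on UNIV (uminus :: 'a \<Rightarrow> 'a)"
    and "subgroup_add K" "ksigma K"
  obtains A where "\<And>n. compact (A n)" "group_chain A" "K = (\<Union>n. A n)"
proof -
  obtain T where T: "\<And>n::nat. compact (T n)" "\<Union>(range T) = K"
    using assms(4) countable_union_of_explicit[of compact K] unfolding ksigma_def by auto
  show ?thesis
  proof
    show "compact (generated_chain T n)" for n by (rule compact_generated_chain[OF assms(1,2) T(1)])
    show "group_chain (generated_chain T)" by (rule group_chain_generated_chain)
    have "generated_chain T n \<subseteq> K" for n
      using T(2) by (intro generated_chain_subset[OF assms(3)]) blast
    moreover have "T n \<subseteq> generated_chain T n" for n by (rule subset_generated_chain)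
    ultimately show "K = (\<Union>n. generated_chain T n)" using T(2) by blast
  qed
qed

section \<open>Countably many closed group chains separating compact ones from points\<close>

lemma compact_imp_open_nbhd_add_uminus:
  fixes A N :: "'a::{topological_space,group_add} set"
  assumes add: "continuous_on UNIV (\<lambda>p::'a \<times> 'a. fst p + snd p)"
    and neg: "continuous_on UNIV (uminus :: 'a \<Rightarrow> 'a)"
    and "compact A" "open N"
    and "\<forall>x\<in>A. \<forall>y\<in>A. x + y \<in> N" "\<forall>x\<in>A. - x \<in> N"
  obtains W where "open W" "A \<subseteq> W" "\<forall>x\<in>W. \<forall>y\<in>W. x + y \<in> N" "\<forall>x\<in>W. - x \<in> N"
proof -
  define P where "P = (\<lambda>p::'a \<times> 'a. fst p + snd p) -` N"
  have "open P" unfolding P_def using open_vimage[OF \<open>open N\<close> add] .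
  then have P: "openin (prod_topology euclidean euclidean) P" by simp
  have AA: "A \<times> A \<subseteq> P" unfolding P_def using assms(5) by auto
  have A: "compactin euclidean A" using \<open>compact A\<close> by simp
  obtain U V where "openin euclidean U" "openin euclidean V" "A \<subseteq> U" "A \<subseteq> V" "U \<times> V \<subseteq> P"
    using Wallace_theorem_prod_topology[OF A A P AA] .
  then have UV: "open U" "open V" "A \<subseteq> U" "A \<subseteq> V" "U \<times> V \<subseteq> P" by simp_all
  show ?thesis
  proof
    show "open (U \<inter> V \<inter> uminus -` N)"
      using UV(1,2) open_vimage[OF \<open>open N\<close> neg] by (intro open_Int)
    show "A \<subseteq> U \<inter> V \<inter> uminus -` N" using UV(3,4) assms(6) by auto
    show "\<forall>x\<in>U \<inter> V \<inter> uminus -` N. \<forall>y\<in>U \<inter> V \<inter> uminus -` N. x + y \<in> N"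
    proof (intro ballI)
      fix x y assume "x \<in> U \<inter> V \<inter> uminus -` N" "y \<in> U \<inter> V \<inter> uminus -` N"
      then have "(x, y) \<in> P" using UV(5) by auto
      then show "x + y \<in> N" unfolding P_def by simp
    qed
    show "\<forall>x\<in>U \<inter> V \<inter> uminus -` N. - x \<in> N" by simp
  qed
qed

lemma compact_subset_finite_base_closure:
  fixes \<B> :: "'a::topological_space set set"
  assumes "regular_space (euclidean :: 'a topology)"
    and "\<And>V. V \<in> \<B> \<Longrightarrow> open V" "\<And>U x. open U \<Longrightarrow> x \<in> U \<Longrightarrow> \<exists>V\<in>\<B>. x \<in> V \<and> V \<subseteq> U"
    and "compact A" "open W" "A \<subseteq> W"
  obtains \<F> where "finite \<F>" "\<F> \<subseteq> \<B>" "A \<subseteq> \<Union>\<F>" "closure (\<Union>\<F>) \<subseteq> W"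
proof -
  define \<B>\<^sub>W where "\<B>\<^sub>W = {V \<in> \<B>. closure V \<subseteq> W}"
  have "A \<subseteq> \<Union>\<B>\<^sub>W"
  proof
    fix x assume "x \<in> A"
    then have "closedin euclidean (- W)" "x \<in> topspace euclidean - (- W)"
      using assms(5,6) by auto
    then obtain U where U: "open U" "x \<in> U" "disjnt (- W) (closure U)"
      using assms(1) unfolding regular_space by (metis euclidean_closure_of open_openin)
    then obtain V where "V \<in> \<B>" "x \<in> V" "V \<subseteq> U" using assms(3) by blast
    moreover from this have "closure V \<subseteq> W"
      using U(3) closure_mono[of V U] unfolding disjnt_def by blast
    ultimately show "x \<in> \<Union>\<B>\<^sub>W" unfolding \<B>\<^sub>W_def by blast
  qed
  then obtain \<F> where \<F>: "\<F> \<subseteq> \<B>\<^sub>W" "finite \<F>" "A \<subseteq> \<Union>\<F>"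
    using compactE[OF assms(4)] assms(2) unfolding \<B>\<^sub>W_def by (metis (no_types, lifting) mem_Collect_eq)
  have "closure (\<Union>\<F>) = \<Union>(closure ` \<F>)"
    using closure_of_Union[OF \<F>(2), of euclidean] by simp
  also have "\<dots> \<subseteq> W" using \<F>(1) unfolding \<B>\<^sub>W_def by blast
  finally show ?thesis using that \<F> unfolding \<B>\<^sub>W_def by blast
qed

lemma countable_shrinking_open_family:
  assumes "second_countable (euclidean :: 'a topology)"
    and "regular_space (euclidean :: 'a topology)"
  obtains \<U> :: "'a::topological_space set set" where "countable \<U>" "\<And>U. U \<in> \<U> \<Longrightarrow> open U"
    "\<And>K W. compact K \<Longrightarrow> open W \<Longrightarrow> K \<subseteq> W \<Longrightarrow> \<exists>U\<in>\<U>. K \<subseteq> U \<and> closure U \<subseteq> W"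
proof -
  obtain \<B> :: "'a set set" where \<B>: "countable \<B>" "\<forall>V\<in>\<B>. open V"
    "\<And>U x. open U \<Longrightarrow> x \<in> U \<Longrightarrow> \<exists>V\<in>\<B>. x \<in> V \<and> V \<subseteq> U"
    using assms(1) unfolding second_countable_def by (metis open_openin)
  have \<B>_open: "\<And>V. V \<in> \<B> \<Longrightarrow> open V" using \<B>(2) by blast
  show ?thesis
  proof
    show "countable (Union ` {\<F>. finite \<F> \<and> \<F> \<subseteq> \<B>})"
      using countable_Collect_finite_subset[OF \<B>(1)] by blast
    show "open U" if "U \<in> Union ` {\<F>. finite \<F> \<and> \<F> \<subseteq> \<B>}" for U
      using that \<B>_open by auto
  next
    fix K W :: "'a set" assume K: "compact K" "open W" "K \<subseteq> W"
    obtain \<F> where "finite \<F>" "\<F> \<subseteq> \<B>" "K \<subseteq> \<Union>\<F>" "closure (\<Union>\<F>) \<subseteq> W"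
      using compact_subset_finite_base_closure[OF assms(2) \<B>_open \<B>(3) K] by blast
    then show "\<exists>U\<in>Union ` {\<F>. finite \<F> \<and> \<F> \<subseteq> \<B>}. K \<subseteq> U \<and> closure U \<subseteq> W"
      by (intro bexI[of _ "\<Union>\<F>"]) auto
  qed
qed

text \<open>Beyond the end of the list the chain is padded with \<open>UNIV\<close>, so that all step
  conditions past the list hold trivially.\<close>

definition closure_chain :: "'a::topological_space set list \<Rightarrow> nat \<Rightarrow> 'a set" where
  "closure_chain Us n = (if n < length Us then closure (Us ! n) else UNIV)"

lemma closed_closure_chain: "closed (closure_chain Us n)"
  by (simp add: closure_chain_def)

lemma closure_chain_snoc: "closure_chain (Us @ [U]) = (closure_chain Us)(length Us := closure U)"
  by (auto simp: closure_chain_def nth_append fun_eq_iff)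

lemma closure_chain_exists_upto:
  fixes A :: "nat \<Rightarrow> 'a::{topological_space,group_add} set" and \<U> :: "'a set set"
  assumes add: "continuous_on UNIV (\<lambda>p::'a \<times> 'a. fst p + snd p)"
    and neg: "continuous_on UNIV (uminus :: 'a \<Rightarrow> 'a)"
    and \<U>_open: "\<And>U. U \<in> \<U> \<Longrightarrow> open U"
    and \<U>_shrink: "\<And>K W. compact K \<Longrightarrow> open W \<Longrightarrow> K \<subseteq> W \<Longrightarrow> \<exists>U\<in>\<U>. K \<subseteq> U \<and> closure U \<subseteq> W"
    and A: "\<And>m. compact (A m)" "group_chain A"
  shows "open W \<Longrightarrow> A n \<subseteq> W \<Longrightarrow> \<exists>Us. length Us = Suc n \<and> set Us \<subseteq> \<U> \<and>
    (\<forall>m. A m \<subseteq> closure_chain Us m) \<and> closure_chain Us n \<subseteq> W \<and> (\<forall>m<n. group_step (closure_chain Us) m)"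
proof (induction n arbitrary: W)
  case 0
  obtain U where U: "U \<in> \<U>" "A 0 \<subseteq> U" "closure U \<subseteq> W" using \<U>_shrink[OF A(1) 0] by blast
  have "A m \<subseteq> closure_chain [U] m" for m
    using U(2) closure_subset[of U] by (cases m) (auto simp: closure_chain_def)
  moreover have "closure_chain [U] 0 \<subseteq> W" using U(3) by (simp add: closure_chain_def)
  ultimately show ?case using U(1) by (intro exI[of _ "[U]"]) simp
next
  case (Suc n)
  \<comment> \<open>The top set \<open>U\<close> is chosen first; the chain below it comes from the induction hypothesis
    for a neighbourhood \<open>W'\<close> of \<open>A n\<close> with \<open>W' + W' \<subseteq> U\<close> and \<open>-W' \<subseteq> U\<close>.\<close>
  obtain U where U: "U \<in> \<U>" "A (Suc n) \<subseteq> U" "closure U \<subseteq> W"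
    using \<U>_shrink[OF A(1) Suc.prems] by blast
  have "\<forall>x\<in>A n. \<forall>y\<in>A n. x + y \<in> U" "\<forall>x\<in>A n. - x \<in> U"
    using A(2) U(2) unfolding group_chain_def group_step_def by blast+
  then obtain W' where W': "open W'" "A n \<subseteq> W'" "\<forall>x\<in>W'. \<forall>y\<in>W'. x + y \<in> U" "\<forall>x\<in>W'. - x \<in> U"
    by (rule compact_imp_open_nbhd_add_uminus[OF add neg A(1) \<U>_open[OF U(1)]])
  obtain Us where Us: "length Us = Suc n" "set Us \<subseteq> \<U>" "\<forall>m. A m \<subseteq> closure_chain Us m"
    "closure_chain Us n \<subseteq> W'" "\<forall>m<n. group_step (closure_chain Us) m"
    using Suc.IH[OF W'(1,2)] by blast
  define C where "C = closure_chain (Us @ [U])"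
  have C: "C = (closure_chain Us)(Suc n := closure U)"
    unfolding C_def closure_chain_snoc Us(1) ..
  have "A m \<subseteq> C m" for m
  proof (cases "m = Suc n")
    case True
    then show ?thesis using U(2) closure_subset[of U] unfolding C by simp
  qed (use Us(3) in \<open>simp add: C\<close>)
  moreover have "C (Suc n) \<subseteq> W" using U(3) unfolding C by simp
  moreover have "group_step C m" if "m < Suc n" for m
  proof (cases "m < n")
    case True
    then show ?thesis using Us(5) unfolding C group_step_def by simp
  next
    case False
    then have "m = n" using that by simp
    then have "C m = closure_chain Us n" "C (Suc m) = closure U" unfolding C by simp_all
    then show ?thesis using Us(4) W'(3,4) closure_subset[of U] unfolding group_step_def by blast
  qed
  ultimately show ?case using Us(1,2) U(1) unfolding C_def by (intro exI[of _ "Us @ [U]"]) simp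
qed

lemma closure_chain_exists:
  fixes A :: "nat \<Rightarrow> 'a::{topological_space,group_add} set" and \<U> :: "'a set set"
  assumes add: "continuous_on UNIV (\<lambda>p::'a \<times> 'a. fst p + snd p)"
    and neg: "continuous_on UNIV (uminus :: 'a \<Rightarrow> 'a)"
    and \<U>_open: "\<And>U. U \<in> \<U> \<Longrightarrow> open U"
    and \<U>_shrink: "\<And>K W. compact K \<Longrightarrow> open W \<Longrightarrow> K \<subseteq> W \<Longrightarrow> \<exists>U\<in>\<U>. K \<subseteq> U \<and> closure U \<subseteq> W"
    and A: "\<And>m. compact (A m)" "group_chain A"
    and W: "open W" "A n \<subseteq> W"
  obtains Us where "set Us \<subseteq> \<U>" "group_chain (closure_chain Us)"
    "\<forall>m. A m \<subseteq> closure_chain Us m" "closure_chain Us n \<subseteq> W"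
proof -
  obtain Us where Us: "length Us = Suc n" "set Us \<subseteq> \<U>" "\<forall>m. A m \<subseteq> closure_chain Us m"
    "closure_chain Us n \<subseteq> W" "\<forall>m<n. group_step (closure_chain Us) m"
    using closure_chain_exists_upto[OF add neg \<U>_open \<U>_shrink A W] by blast
  have "group_step (closure_chain Us) m" for m
  proof (cases "m < n")
    case False
    then have "closure_chain Us (Suc m) = UNIV" using Us(1) by (simp add: closure_chain_def)
    then show ?thesis by (simp add: group_step_def)
  qed (use Us(5) in blast)
  moreover have "0 \<in> closure_chain Us 0" using Us(3) group_chain_zero[OF A(2)] by blast
  ultimately have "group_chain (closure_chain Us)" unfolding group_chain_def by blast
  then show ?thesis using that Us(2-4) by blast
qed

definition separating_group_chains :: "(nat \<Rightarrow> nat \<Rightarrow> 'a::{topological_space,group_add} set) \<Rightarrow> bool"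
  where "separating_group_chains C \<longleftrightarrow> (\<forall>A n W. (\<forall>m. compact (A m)) \<and> group_chain A \<and> open W \<and> A n \<subseteq> W
    \<longrightarrow> (\<exists>j. (\<forall>m. A m \<subseteq> C j m) \<and> C j n \<subseteq> W))"

lemma separating_group_chainsD:
  assumes "separating_group_chains C" "\<And>m. compact (A m)" "group_chain A" "open W" "A n \<subseteq> W"
  shows "\<exists>j. (\<forall>m. A m \<subseteq> C j m) \<and> C j n \<subseteq> W"
  using assms unfolding separating_group_chains_def by blast

lemma separating_group_chain_enumeration:
  assumes "second_countable (euclidean :: 'a topology)" "regular_space (euclidean :: 'a topology)"
    and add: "continuous_on UNIV (\<lambda>p::'a \<times> 'a. fst p + snd p)"
    and neg: "continuous_on UNIV (uminus :: 'a \<Rightarrow> 'a)"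
  obtains C :: "nat \<Rightarrow> nat \<Rightarrow> 'a::{topological_space,group_add} set"
  where "\<And>j. group_chain (C j)" "\<And>j n. closed (C j n)" "separating_group_chains C"
proof -
  obtain \<U> :: "'a set set" where \<U>: "countable \<U>" "\<And>U. U \<in> \<U> \<Longrightarrow> open U"
    "\<And>K W. compact K \<Longrightarrow> open W \<Longrightarrow> K \<subseteq> W \<Longrightarrow> \<exists>U\<in>\<U>. K \<subseteq> U \<and> closure U \<subseteq> W"
    using countable_shrinking_open_family[OF assms(1,2)] by blast
  define \<D> where "\<D> = {closure_chain Us | Us. set Us \<subseteq> \<U> \<and> group_chain (closure_chain Us)}"
  have "\<D> \<subseteq> closure_chain ` lists \<U>" unfolding \<D>_def by auto
  then have "countable \<D>"
    using countable_lists[OF \<U>(1)] by (meson countable_image countable_subset)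
  have "group_chain (closure_chain [])" by (simp add: closure_chain_def group_chain_def group_step_def)
  then have "closure_chain [] \<in> \<D>" unfolding \<D>_def by (intro CollectI exI[of _ "[]"]) simp
  then have "from_nat_into \<D> j \<in> \<D>" for j by (intro from_nat_into) blast
  moreover have "group_chain C \<and> (\<forall>n. closed (C n))" if "C \<in> \<D>" for C
    using that closed_closure_chain unfolding \<D>_def by auto
  ultimately have from_nat_into_\<D>: "group_chain (from_nat_into \<D> j)" "closed (from_nat_into \<D> j n)"
    for j n by blast+
  show ?thesis
  proof
    show "group_chain (from_nat_into \<D> j)" "closed (from_nat_into \<D> j n)" for j n
      by (fact from_nat_into_\<D>)+
  next
    show "separating_group_chains (from_nat_into \<D>)"
      unfolding separating_group_chains_def
    proof (intro allI impI)
      fix A :: "nat \<Rightarrow> 'a set" and n W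
      assume "(\<forall>m. compact (A m)) \<and> group_chain A \<and> open W \<and> A n \<subseteq> W"
      then have A: "\<And>m. compact (A m)" "group_chain A" and W: "open W" "A n \<subseteq> W" by blast+
      obtain Us where "set Us \<subseteq> \<U>" "group_chain (closure_chain Us)"
        "\<forall>m. A m \<subseteq> closure_chain Us m" "closure_chain Us n \<subseteq> W"
        using closure_chain_exists[OF add neg \<U>(2,3) A W] by blast
      moreover from this have "closure_chain Us \<in> \<D>"
        unfolding \<D>_def by (intro CollectI exI[of _ Us]) simp
      then obtain j where "from_nat_into \<D> j = closure_chain Us"
        using from_nat_into_surj[OF \<open>countable \<D>\<close>] by blast
      ultimately have "(\<forall>m. A m \<subseteq> from_nat_into \<D> j m) \<and> from_nat_into \<D> j n \<subseteq> W" by simp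
      then show "\<exists>j. (\<forall>m. A m \<subseteq> from_nat_into \<D> j m) \<and> from_nat_into \<D> j n \<subseteq> W" by blast
    qed
  qed
qed

section \<open>The universal subgroup\<close>

definition selector :: "nat set \<Rightarrow> 'a::zero \<Rightarrow> nat \<Rightarrow> 'a" where
  "selector T x j = (if j \<in> T then x else 0)"

lemma continuous_on_selector: "continuous_on UNIV (selector T :: 'a::{topological_space,zero} \<Rightarrow> _)"
proof (rule continuous_on_coordinatewise_then_product)
  fix j
  show "continuous_on UNIV (\<lambda>x::'a. selector T x j)"
    by (cases "j \<in> T") (simp_all add: selector_def)
qed

lemma selector_add: "selector T (x + y) = selector T x + selector T (y :: 'a::monoid_add)"
  by (simp add: selector_def fun_eq_iff)

lemma vimage_selector_eq_Union:
  fixes A :: "nat \<Rightarrow> 'a::group_add set" and C :: "nat \<Rightarrow> nat \<Rightarrow> 'a set"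
  assumes C: "\<And>j. group_chain (C j)"
    and separating: "\<And>n x. x \<notin> A n \<Longrightarrow> \<exists>j. (\<forall>m. A m \<subseteq> C j m) \<and> x \<notin> C j n"
  shows "selector {j. \<forall>m. A m \<subseteq> C j m} -` (\<Union>n. {y. \<forall>j. y j \<in> C j n}) = (\<Union>n. A n)"
    (is "?\<phi> -` _ = _")
proof (intro equalityI subsetI)
  fix x assume "x \<in> ?\<phi> -` (\<Union>n. {y. \<forall>j. y j \<in> C j n})"
  then obtain n where n: "\<And>j. ?\<phi> x j \<in> C j n" by blast
  have "x \<in> A n"
  proof (rule ccontr)
    assume "x \<notin> A n"
    then obtain j where "\<forall>m. A m \<subseteq> C j m" "x \<notin> C j n" using separating by blast
    then show False using n[of j] by (simp add: selector_def)
  qed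
  then show "x \<in> (\<Union>n. A n)" by blast
next
  fix x assume "x \<in> (\<Union>n. A n)"
  then obtain n where "x \<in> A n" by blast
  then have "?\<phi> x j \<in> C j n" for j using group_chain_zero[OF C] by (auto simp: selector_def)
  then show "x \<in> ?\<phi> -` (\<Union>n. {y. \<forall>j. y j \<in> C j n})" by blast
qed

lemma ksigma_subgroup_eq_vimage_selector:
  fixes C :: "nat \<Rightarrow> nat \<Rightarrow> 'a::{topological_space,group_add} set"
  assumes t1: "t1_space (euclidean :: 'a topology)"
    and add: "continuous_on UNIV (\<lambda>p::'a \<times> 'a. fst p + snd p)"
    and neg: "continuous_on UNIV (uminus :: 'a \<Rightarrow> 'a)"
    and C: "\<And>j. group_chain (C j)"
    and separating: "separating_group_chains C"
    and "subgroup_add K" "ksigma K"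
  obtains T where "selector T -` (\<Union>n. {y. \<forall>j. y j \<in> C j n}) = K"
proof -
  obtain A where A: "\<And>n. compact (A n)" "group_chain A" "K = (\<Union>n. A n)"
    using ksigma_subgroup_eq_Union_compact_chain[OF add neg assms(6,7)] by blast
  have "\<exists>j. (\<forall>m. A m \<subseteq> C j m) \<and> x \<notin> C j n" if x: "x \<notin> A n" for x n
  proof -
    have "open (- {x})" using closedin_t1_singleton[OF t1] by (simp add: open_Compl)
    moreover have "A n \<subseteq> - {x}" using x by blast
    ultimately obtain j where "\<forall>m. A m \<subseteq> C j m" "C j n \<subseteq> - {x}"
      using separating_group_chainsD[OF separating A(1,2)] by blast
    then show ?thesis by blast
  qed
  from vimage_selector_eq_Union[OF C this] show ?thesis using that A(3) by blast
qed

theorem exists_universal_Ksigma_subgroup_power: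
  assumes "second_countable (euclidean :: 'a topology)" "regular_space (euclidean :: 'a topology)"
    and t1: "t1_space (euclidean :: 'a topology)"
    and add: "continuous_on UNIV (\<lambda>p::'a \<times> 'a. fst p + snd p)"
    and neg: "continuous_on UNIV (uminus :: 'a::{topological_space,group_add} \<Rightarrow> 'a)"
  shows "\<exists>H :: (nat \<Rightarrow> 'a) set. subgroup_add H \<and> fsigma_in euclidean H \<and>
           (\<forall>K :: 'a set. subgroup_add K \<and> ksigma K \<longrightarrow>
              (\<exists>\<phi> :: 'a \<Rightarrow> (nat \<Rightarrow> 'a).
                  continuous_on UNIV \<phi> \<and> (\<forall>x y. \<phi> (x + y) = \<phi> x + \<phi> y) \<and> \<phi> -` H = K))"
proof -
  obtain C :: "nat \<Rightarrow> nat \<Rightarrow> 'a set"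
    where C: "\<And>j. group_chain (C j)" "\<And>j n. closed (C j n)" "separating_group_chains C"
    using separating_group_chain_enumeration[OF assms(1,2) add neg] by blast
  define H where "H = (\<Union>n. {y. \<forall>j. y j \<in> C j n})"
  have "subgroup_add H"
    unfolding H_def by (intro subgroup_add_group_chain_Union group_chain_Pi C)
  moreover have "fsigma_in euclidean H"
    unfolding H_def fsigma_in_def union_of_def
  proof (intro exI[of _ "range (\<lambda>n. {y. \<forall>j. y j \<in> C j n})"] conjI)
    have "closed {y :: nat \<Rightarrow> 'a. \<forall>j. y j \<in> C j n}" for n
      using closed_vimage_continuous_on[OF continuous_on_product_coordinates C(2)]
      by (intro closed_Collect_all) (simp add: vimage_def)
    then show "range (\<lambda>n. {y. \<forall>j. y j \<in> C j n}) \<subseteq> Collect (closedin euclidean)" by auto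
  qed simp_all
  moreover have "\<exists>\<phi> :: 'a \<Rightarrow> (nat \<Rightarrow> 'a).
      continuous_on UNIV \<phi> \<and> (\<forall>x y. \<phi> (x + y) = \<phi> x + \<phi> y) \<and> \<phi> -` H = K"
    if K: "subgroup_add K" "ksigma K" for K
  proof -
    obtain T where "selector T -` H = K"
      using ksigma_subgroup_eq_vimage_selector[OF t1 add neg C(1,3) K] unfolding H_def .
    then show ?thesis
      by (intro exI[of _ "selector T"] conjI allI continuous_on_selector selector_add)
  qed
  ultimately show ?thesis by blast
qed

lemma nat_power_reindexing:
  obtains split :: "(nat \<Rightarrow> 'a::{topological_space,plus}) \<Rightarrow> nat \<Rightarrow> nat \<Rightarrow> 'a"
    and join :: "(nat \<Rightarrow> nat \<Rightarrow> 'a) \<Rightarrow> nat \<Rightarrow> 'a"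
  where "continuous_on UNIV split" "\<And>x y. split (x + y) = split x + split y"
    "continuous_on UNIV join" "\<And>x y. join (x + y) = join x + join y"
    "\<And>z. split (join z) = z"
proof
  show "continuous_on UNIV (\<lambda>y::nat \<Rightarrow> 'a. \<lambda>j i. y (prod_encode (j, i)))"
    by (intro continuous_on_coordinatewise_then_product continuous_on_product_coordinates)
  show "continuous_on UNIV (\<lambda>z::nat \<Rightarrow> nat \<Rightarrow> 'a. \<lambda>k. z (fst (prod_decode k)) (snd (prod_decode k)))"
  proof (rule continuous_on_coordinatewise_then_product)
    fix k
    show "continuous_on UNIV (\<lambda>z::nat \<Rightarrow> nat \<Rightarrow> 'a. z (fst (prod_decode k)) (snd (prod_decode k)))"
      by (rule continuous_on_compose2[OF continuous_on_product_coordinates continuous_on_product_coordinates]) simp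
  qed
qed (simp_all add: fun_eq_iff)

theorem exists_universal_Ksigma_subgroup_fun:
  assumes "second_countable (euclidean :: 'a topology)" "regular_space (euclidean :: 'a topology)"
    and "t1_space (euclidean :: 'a topology)"
    and "continuous_on UNIV (\<lambda>p::'a \<times> 'a. fst p + snd p)"
    and "continuous_on UNIV (uminus :: 'a::{topological_space,group_add} \<Rightarrow> 'a)"
  shows "\<exists>H :: (nat \<Rightarrow> 'a) set. subgroup_add H \<and> fsigma_in euclidean H \<and>
           (\<forall>K :: (nat \<Rightarrow> 'a) set. subgroup_add K \<and> ksigma K \<longrightarrow>
              (\<exists>\<phi> :: (nat \<Rightarrow> 'a) \<Rightarrow> (nat \<Rightarrow> 'a).
                  continuous_on UNIV \<phi> \<and> (\<forall>x y. \<phi> (x + y) = \<phi> x + \<phi> y) \<and> \<phi> -` H = K))"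
proof -
  obtain H\<^sub>0 :: "(nat \<Rightarrow> nat \<Rightarrow> 'a) set" where H\<^sub>0: "subgroup_add H\<^sub>0" "fsigma_in euclidean H\<^sub>0"
    "\<forall>K :: (nat \<Rightarrow> 'a) set. subgroup_add K \<and> ksigma K \<longrightarrow> (\<exists>\<phi> :: (nat \<Rightarrow> 'a) \<Rightarrow> nat \<Rightarrow> nat \<Rightarrow> 'a.
       continuous_on UNIV \<phi> \<and> (\<forall>x y. \<phi> (x + y) = \<phi> x + \<phi> y) \<and> \<phi> -` H\<^sub>0 = K)"
    using exists_universal_Ksigma_subgroup_power[OF second_countable_euclidean_fun[OF assms(1)]
        regular_space_euclidean_fun[OF assms(2)] t1_space_euclidean_fun[OF assms(3)]
        continuous_on_fun_add[OF assms(4)] continuous_on_fun_uminus[OF assms(5)]]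
    by blast
  obtain split :: "(nat \<Rightarrow> 'a) \<Rightarrow> nat \<Rightarrow> nat \<Rightarrow> 'a" and join where split_join:
    "continuous_on UNIV split" "\<And>x y. split (x + y) = split x + split y"
    "continuous_on UNIV join" "\<And>x y. join (x + y) = join x + join y" "\<And>z. split (join z) = z"
    using nat_power_reindexing by blast
  show ?thesis
  proof (intro exI[of _ "split -` H\<^sub>0"] conjI allI impI)
    show "subgroup_add (split -` H\<^sub>0)" using subgroup_add_vimage split_join(2) H\<^sub>0(1) .
    show "fsigma_in euclidean (split -` H\<^sub>0)" using fsigma_in_vimage split_join(1) H\<^sub>0(2) .
    fix K :: "(nat \<Rightarrow> 'a) set" assume "subgroup_add K \<and> ksigma K"
    with H\<^sub>0(3) obtain \<phi> where \<phi>: "continuous_on UNIV \<phi>" "\<forall>x y. \<phi> (x + y) = \<phi> x + \<phi> y" "\<phi> -` H\<^sub>0 = K"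
      by blast
    have "continuous_on UNIV (join \<circ> \<phi>)"
      using continuous_on_compose[OF \<phi>(1) continuous_on_subset[OF split_join(3)]] by simp
    moreover have "(join \<circ> \<phi>) -` split -` H\<^sub>0 = K" using \<phi>(3) split_join(5) by auto
    moreover have "\<forall>x y. (join \<circ> \<phi>) (x + y) = (join \<circ> \<phi>) x + (join \<circ> \<phi>) y"
      using \<phi>(2) split_join(4) by simp
    ultimately show "\<exists>\<psi>. continuous_on UNIV \<psi> \<and> (\<forall>x y. \<psi> (x + y) = \<psi> x + \<psi> y) \<and> \<psi> -` split -` H\<^sub>0 = K"
      by blast
  qed
qed

theorem mainTheorem2:
  assumes "completely_metrizable_space (euclidean :: 'a::{topological_space, group_add} topology)"
    and "separable_space (euclidean :: 'a topology)"
    and "continuous_on UNIV (\<lambda>p::'a \<times> 'a. fst p + snd p)"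
    and "continuous_on UNIV (uminus :: 'a \<Rightarrow> 'a)"
  shows "\<exists>H :: (nat \<Rightarrow> 'a) set. subgroup_add H \<and> fsigma_in euclidean H \<and>
           (\<forall>K :: (nat \<Rightarrow> 'a) set. subgroup_add K \<and> ksigma K \<longrightarrow>
              (\<exists>\<phi> :: (nat \<Rightarrow> 'a) \<Rightarrow> (nat \<Rightarrow> 'a).
                  continuous_on UNIV \<phi> \<and> (\<forall>x y. \<phi> (x + y) = \<phi> x + \<phi> y) \<and> \<phi> -` H = K))"
proof -
  have metrizable: "metrizable_space (euclidean :: 'a topology)"
    using assms(1) by (rule completely_metrizable_imp_metrizable_space)
  show ?thesis
  proof (rule exists_universal_Ksigma_subgroup_fun)
    show "second_countable (euclidean :: 'a topology)"
      using metrizable assms(2) by (rule separable_metrizable_imp_second_countable)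
    show "regular_space (euclidean :: 'a topology)"
      using metrizable by (rule metrizable_imp_regular_space)
    show "t1_space (euclidean :: 'a topology)"
      using metrizable by (rule metrizable_imp_t1_space)
  qed (fact assms(3,4))+
qed

end
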